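(* Consider a $\mathrm{Knapsack}$ instance $(C,V)$ with LP relaxation $K$ and optimal integral value $\mathrm{OPT}$, and let $t\ge 2$ be an integer. Then $$\max\Big\{\sum_{i\in V}v_i\,y_{\{i\}}: y\in\mathrm{La}^t(K)\Big\}\le\Big(1+\frac{1}{t-1}\Big)\mathrm{OPT}.$$ In particular, the integrality gap of the $t$-th level of the Lasserre hierarchy for $\mathrm{Knapsack}$ is at most $t/(t-1)$.
   Context: A $\mathrm{Knapsack}$ instance consists of objects $V=[n]$ with sizes $c_i\ge 0$, values $v_i\ge 0$ and a capacity $C$ with $c_i\le C$ for all $i$; $\mathrm{OPT}$ is the maximum of $\sum_{i\in X}v_i$ over $X\subseteq V$ with $\sum_{i\in X}c_i\le C$. Its LP relaxation is $K=\{x\in[0,1]^n: g(x)\ge 0\}$ with the single constraint $g(x)=C-\sum_{i\in V}c_ix_i$. Notation: $\mathcal P_t(U)$ is the set of subsets of $U$ of size at most $t$. For a collection $\mathcal T$ of subsets and a vector $y$ indexed by subsets, $M_{\mathcal T}(y)$ is the symmetric matrix indexed by $\mathcal T$ with $(I,J)$-entry $y_{I\cup J}$. For an affine $g(x)=b+\sum_{j}a_jx_j$, $(g*y)_I=b\,y_I+\sum_j a_j y_{I\cup\{j\}}$. The $t$-th Lasserre lifted polytope $\mathrm{La}^t(K)$ is the set of $y\in[0,1]^{\mathcal P_{2t}(V)}$ with $y_\emptyset=1$, $M_{\mathcal P_t(V)}(y)\succeq0$, and $M_{\mathcal P_{t-1}(V)}(g*y)\succeq0$. *)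

theory Defs
  imports "HOL-Analysis.Analysis"
begin

definition Pt :: "nat \<Rightarrow> 'a set \<Rightarrow> 'a set set" where
  "Pt t U = {I. I \<subseteq> U \<and> card I \<le> t}"

text \<open>Positive semidefiniteness of the real symmetric matrix indexed by the finite
  collection T with (I,J)-entry w (I \<union> J), i.e. the moment matrix M_T(w).\<close>
definition moment_psd :: "'a set set \<Rightarrow> ('a set \<Rightarrow> real) \<Rightarrow> bool" where
  "moment_psd T w \<longleftrightarrow>
     (\<forall>z :: 'a set \<Rightarrow> real. (\<Sum>I\<in>T. \<Sum>J\<in>T. z I * w (I \<union> J) * z J) \<ge> 0)"

text \<open>(g * y)_I for g(x) = C - sum_i c_i x_i.\<close>
definition knap_shift :: "'a set \<Rightarrow> ('a \<Rightarrow> real) \<Rightarrow> real \<Rightarrow> ('a set \<Rightarrow> real) \<Rightarrow> 'a set \<Rightarrow> real" where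
  "knap_shift V c C y I = C * y I - (\<Sum>j\<in>V. c j * y (I \<union> {j}))"

text \<open>The t-th Lasserre lifted polytope La^t(K) of the knapsack LP relaxation K
  (only the values of y on P_{2t}(V) matter).\<close>
definition lasserre_knapsack :: "nat \<Rightarrow> 'a set \<Rightarrow> ('a \<Rightarrow> real) \<Rightarrow> real \<Rightarrow> ('a set \<Rightarrow> real) set" where
  "lasserre_knapsack t V c C =
     {y. (\<forall>I\<in>Pt (2*t) V. 0 \<le> y I \<and> y I \<le> 1) \<and> y {} = 1 \<and>
         moment_psd (Pt t V) y \<and>
         moment_psd (Pt (t - 1) V) (knap_shift V c C y)}"

definition knapsack_OPT :: "'a set \<Rightarrow> ('a \<Rightarrow> real) \<Rightarrow> ('a \<Rightarrow> real) \<Rightarrow> real \<Rightarrow> real" where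
  "knapsack_OPT V c v C = Max {(\<Sum>i\<in>X. v i) | X. X \<subseteq> V \<and> (\<Sum>i\<in>X. c i) \<le> C}"

end

theory Submission
  imports Defs "HOL-Library.Disjoint_Sets"
begin

text \<open>
  Call an item large if v_i > OPT/(t-1). Any t-1 large items overflow the knapsack, so
  the diagonal of M_{t-1}(g * y) forces y_I = 0 for such I, and positive semidefiniteness
  of M_t(y) propagates this zero to all sets of size at most 2t containing I. Consequently
  y is a mixture, over the sets S of at most t-2 large items, of "slices" obtained by a
  truncated Moebius inversion; the mixture weights and the slice coordinates are values
  of the two moment forms at signed indicator vectors, which makes them nonnegative and
  gives each slice the knapsack constraint. In each slice the large items are integral,
  so the normalized slice is an LP solution whose fractional items are small, and the
  classical knapsack LP bound gives value at most OPT + OPT/(t-1).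
\<close>

definition quad_form :: "'a set set \<Rightarrow> ('a set \<Rightarrow> real) \<Rightarrow> ('a set \<Rightarrow> real) \<Rightarrow> real" where
  "quad_form T w z = (\<Sum>I\<in>T. \<Sum>J\<in>T. z I * w (I \<union> J) * z J)"

lemma moment_psdD: "moment_psd T w \<Longrightarrow> 0 \<le> quad_form T w z"
  by (simp add: moment_psd_def quad_form_def)

lemma quad_form_support:
  assumes "finite T" "A \<subseteq> T" "\<And>I. I \<notin> A \<Longrightarrow> z I = 0"
  shows "quad_form T w z = quad_form A w z"
proof -
  have "quad_form T w z = (\<Sum>I\<in>A. \<Sum>J\<in>T. z I * w (I \<union> J) * z J)"
    unfolding quad_form_def by (rule sum.mono_neutral_right) (use assms in auto)
  also have "\<dots> = quad_form A w z"
    unfolding quad_form_def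
    by (intro sum.cong refl sum.mono_neutral_right) (use assms in auto)
  finally show ?thesis .
qed

lemma moment_psd_diag:
  assumes "moment_psd T w" "finite T" "I \<in> T"
  shows "0 \<le> w I"
proof -
  let ?z = "\<lambda>K. if K = I then 1 else 0 :: real"
  have "0 \<le> quad_form T w ?z" using assms(1) by (rule moment_psdD)
  also have "\<dots> = quad_form {I} w ?z" by (rule quad_form_support) (use assms in auto)
  finally show ?thesis by (simp add: quad_form_def)
qed

text \<open>A vanishing diagonal entry forces its whole row to vanish (2x2 principal minors):
  if w I = 0 then w (I \<union> J) = 0.\<close>
lemma moment_psd_zero_union:
  assumes psd: "moment_psd T w" and "finite T" "I \<in> T" "J \<in> T" and wI: "w I = 0"
  shows "w (I \<union> J) = 0"
proof (cases "I = J")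
  case True
  then show ?thesis using wI by simp
next
  case False
  have quadratic: "0 \<le> w J + 2 * s * w (I \<union> J)" for s
  proof -
    let ?z = "\<lambda>K. if K = J then 1 else if K = I then s else 0 :: real"
    have "0 \<le> quad_form T w ?z" using psd by (rule moment_psdD)
    also have "\<dots> = quad_form {I, J} w ?z" by (rule quad_form_support) (use assms in auto)
    also have "\<dots> = s * s * w I + 2 * s * w (I \<union> J) + w J"
      using False by (simp add: quad_form_def Un_commute algebra_simps)
    finally show ?thesis using wI by simp
  qed
  show ?thesis
  proof (rule ccontr)
    assume nz: "w (I \<union> J) \<noteq> 0"
    have "0 \<le> w J + 2 * (- (w J + 1) / (2 * w (I \<union> J))) * w (I \<union> J)" by (rule quadratic)
    also have "\<dots> = -1" using nz by (simp add: field_simps)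
    finally show False by simp
  qed
qed

lemma quad_form_extend:
  fixes Z :: "'a set set" and z :: "'a set \<Rightarrow> real" and a b :: real
  assumes "finite Z" "\<And>K. K \<in> Z \<Longrightarrow> i \<notin> K"
  defines "z' \<equiv> \<lambda>I. if i \<in> I then b * z (I - {i}) else a * z I"
  shows "quad_form (Z \<union> insert i ` Z) w z'
    = a * a * quad_form Z w z + (2 * a * b + b * b) * quad_form Z (\<lambda>K. w (insert i K)) z"
proof -
  have inj: "inj_on (insert i) Z"
    by (rule inj_onI) (metis Diff_insert_absorb assms(2))
  have z'_plain: "z' K = a * z K" and z'_lift: "z' (insert i K) = b * z K" if "K \<in> Z" for K
    using that assms(2)[OF that] by (simp_all add: z'_def)
  have split: "(\<Sum>I\<in>Z \<union> insert i ` Z. F I) = (\<Sum>K\<in>Z. F K) + (\<Sum>K\<in>Z. F (insert i K))"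
    for F :: "'a set \<Rightarrow> real"
    using assms(1,2) by (subst sum.union_disjoint) (auto simp: sum.reindex[OF inj])
  have "quad_form (Z \<union> insert i ` Z) w z'
      = (\<Sum>I\<in>Z. \<Sum>J\<in>Z. a * a * (z I * w (I \<union> J) * z J))
      + (\<Sum>I\<in>Z. \<Sum>J\<in>Z. (2 * a * b + b * b) * (z I * w (insert i (I \<union> J)) * z J))"
    unfolding quad_form_def split sum.distrib[symmetric]
    by (intro sum.cong refl) (simp add: z'_plain z'_lift algebra_simps)
  then show ?thesis
    by (simp add: quad_form_def sum_distrib_left)
qed

text \<open>Supersets of S inside L with at most N elements, and the signed sums over them:
  mobius L N f S is the truncated Moebius transform of f at S. If f is the moment vector
  of a distribution that picks at most N elements of L, it is the probability of picking
  exactly S.\<close>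
definition bounded_supsets :: "'a set \<Rightarrow> nat \<Rightarrow> 'a set \<Rightarrow> 'a set set" where
  "bounded_supsets L N S = {K. K \<subseteq> L \<and> card K \<le> N \<and> S \<subseteq> K}"

definition mobius :: "'a set \<Rightarrow> nat \<Rightarrow> ('a set \<Rightarrow> real) \<Rightarrow> 'a set \<Rightarrow> real" where
  "mobius L N f S = (\<Sum>K\<in>bounded_supsets L N S. (-1) ^ card (K - S) * f K)"

definition mobius_vec :: "'a set \<Rightarrow> nat \<Rightarrow> 'a set \<Rightarrow> 'a set \<Rightarrow> real" where
  "mobius_vec L N S I = (if I \<in> bounded_supsets L N S then (-1) ^ card (I - S) else 0)"

lemma mobius_vec_support: "I \<notin> bounded_supsets L N {} \<Longrightarrow> mobius_vec L N S I = 0"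
  by (auto simp: mobius_vec_def bounded_supsets_def)

lemma finite_bounded_supsets: "finite L \<Longrightarrow> finite (bounded_supsets L N S)"
  unfolding bounded_supsets_def by (rule finite_subset[of _ "Pow L"]) auto

lemma sign_toggle:
  assumes "finite J" "x \<notin> S"
  shows "(-1::real) ^ card ((if x \<in> J then J - {x} else insert x J) - S) = - ((-1) ^ card (J - S))"
proof (cases "x \<in> J")
  case True
  then have "x \<in> J - S" using assms(2) by simp
  then have "card (J - S) = Suc (card ((J - S) - {x}))"
    using assms(1) by (intro card_Suc_Diff1[symmetric]) simp_all
  moreover have "(J - S) - {x} = (J - {x}) - S" by blast
  ultimately show ?thesis using True by simp
next
  case False
  then have "insert x J - S = insert x (J - S)" using assms by auto
  then show ?thesis using False assms by simp
qed

text \<open>Sign-reversing involution (toggle x): the row of the signed sum indexed by I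
  vanishes as soon as I contains an element x outside S, provided f vanishes just above
  the truncation level N.\<close>
lemma mobius_row_vanishes:
  assumes "finite L" "S \<subseteq> I" "I \<subseteq> L" "x \<in> I" "x \<notin> S"
    and vanish: "\<And>K. K \<subseteq> L \<Longrightarrow> N < card K \<Longrightarrow> card K \<le> card I + N \<Longrightarrow> f K = 0"
  shows "(\<Sum>J\<in>bounded_supsets L N S. (-1::real) ^ card (J - S) * f (I \<union> J)) = 0"
proof -
  let ?g = "\<lambda>J. (-1::real) ^ card (J - S) * f (I \<union> J)"
  let ?A = "{J \<in> bounded_supsets L N S. card (I \<union> J) \<le> N}"
  let ?toggle = "\<lambda>J. if x \<in> J then J - {x} else insert x J"
  have finI: "finite I" using assms(1,3) by (rule finite_subset[rotated])
  have "(\<Sum>J\<in>bounded_supsets L N S. ?g J) = (\<Sum>J\<in>?A. ?g J)"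
  proof (rule sum.mono_neutral_right)
    show "\<forall>J\<in>bounded_supsets L N S - ?A. ?g J = 0"
    proof
      fix J assume J: "J \<in> bounded_supsets L N S - ?A"
      then have "card J \<le> N" "N < card (I \<union> J)" "I \<union> J \<subseteq> L"
        using assms(3) by (auto simp: bounded_supsets_def)
      moreover have "card (I \<union> J) \<le> card I + card J" by (rule card_Un_le)
      ultimately show "?g J = 0" using vanish[of "I \<union> J"] by simp
    qed
  qed (use finite_bounded_supsets[OF assms(1)] in auto)
  also have "\<dots> = 0"
  proof (rule sum_involution_eq_0[where h = ?toggle])
    fix J assume J: "J \<in> ?A"
    then have finJ: "finite J" using assms(1) finite_subset by (auto simp: bounded_supsets_def)
    have same_union: "I \<union> ?toggle J = I \<union> J" using assms(4) by auto
    have "card (?toggle J) \<le> card (I \<union> ?toggle J)" by (rule card_mono) (use finI finJ in auto)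
    then show "?toggle J \<in> ?A" using J assms same_union by (auto simp: bounded_supsets_def)
    show "?toggle (?toggle J) = J" "?toggle J \<noteq> J" by auto
    show "?g (?toggle J) + ?g J = 0" using sign_toggle[OF finJ assms(5)] same_union by simp
  qed
  finally show ?thesis .
qed

lemma quad_form_mobius_vec:
  assumes "finite L" "S \<subseteq> L" "card S \<le> N"
    and vanish: "\<And>K. K \<subseteq> L \<Longrightarrow> N < card K \<Longrightarrow> card K \<le> 2 * N + 1 \<Longrightarrow> f K = 0"
  shows "quad_form (bounded_supsets L N {}) f (mobius_vec L N S) = mobius L N f S"
proof -
  let ?Z = "bounded_supsets L N S"
  let ?row = "\<lambda>I. \<Sum>J\<in>?Z. (-1::real) ^ card (J - S) * f (I \<union> J)"
  have finZ: "finite ?Z" using assms(1) by (rule finite_bounded_supsets)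
  have SZ: "S \<in> ?Z" using assms by (auto simp: bounded_supsets_def)
  have other_rows: "?row I = 0" if "I \<in> ?Z - {S}" for I
  proof -
    have "I - S \<noteq> {}" using that by (auto simp: bounded_supsets_def)
    then obtain x where "x \<in> I" "x \<notin> S" by blast
    then show ?thesis
      by (intro mobius_row_vanishes[OF assms(1)]) (use that vanish in \<open>auto simp: bounded_supsets_def\<close>)
  qed
  have "quad_form (bounded_supsets L N {}) f (mobius_vec L N S) = quad_form ?Z f (mobius_vec L N S)"
    by (rule quad_form_support[OF finite_bounded_supsets[OF assms(1)]])
      (auto simp: bounded_supsets_def mobius_vec_def)
  also have "\<dots> = (\<Sum>I\<in>?Z. mobius_vec L N S I * ?row I)"
    by (simp add: quad_form_def sum_distrib_left mobius_vec_def mult_ac)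
  also have "\<dots> = mobius_vec L N S S * ?row S"
    by (rule sum.remove[OF finZ SZ, THEN trans]) (simp add: other_rows)
  also have "\<dots> = mobius L N f S"
    using SZ unfolding mobius_def mobius_vec_def
    by (simp, intro sum.cong refl) (auto simp: bounded_supsets_def Un_absorb1)
  finally show ?thesis .
qed

lemma alternating_sum_Pow:
  assumes "finite K"
  shows "(\<Sum>S\<in>Pow K. (-1::real) ^ card (K - S)) = (if K = {} then 1 else 0)"
proof -
  have "(\<Sum>S\<in>Pow K. (-1::real) ^ card (K - S)) = (\<Sum>T\<in>Pow K. (-1) ^ card T)"
    by (rule sum.reindex_bij_witness[of _ "\<lambda>T. K - T" "\<lambda>T. K - T"]) auto
  also have "\<dots> = (if K = {} then 1 else 0)"
  proof (cases "K = {}")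
    case False
    then have "card {T. T \<subseteq> K \<and> even (card T)} = card {T. T \<subseteq> K \<and> odd (card T)}"
      using card_subsupersets_even_odd[OF assms, of "{}"] by auto
    then show ?thesis
      using False assms by (simp add: Pow_def sum_alternating_cancels)
  qed simp
  finally show ?thesis .
qed

lemma mobius_sum:
  assumes "finite L"
  shows "(\<Sum>S\<in>bounded_supsets L N {}. mobius L N f S) = f {}"
proof -
  let ?Z = "bounded_supsets L N {}"
  have finZ: "finite ?Z" using assms by (rule finite_bounded_supsets)
  have down_closed: "{S. S \<in> ?Z \<and> S \<subseteq> K} = Pow K" if "K \<in> ?Z" for K
    using that assms by (auto simp: bounded_supsets_def) (meson card_mono finite_subset le_trans)
  have "(\<Sum>S\<in>?Z. mobius L N f S)
      = (\<Sum>S\<in>?Z. \<Sum>K\<in>{K. K \<in> ?Z \<and> S \<subseteq> K}. (-1::real) ^ card (K - S) * f K)"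
    unfolding mobius_def by (intro sum.cong refl) (auto simp: bounded_supsets_def)
  also have "\<dots> = (\<Sum>K\<in>?Z. \<Sum>S\<in>{S. S \<in> ?Z \<and> S \<subseteq> K}. (-1::real) ^ card (K - S) * f K)"
    by (rule sum.swap_restrict[OF finZ finZ])
  also have "\<dots> = (\<Sum>K\<in>?Z. f K * (\<Sum>S\<in>Pow K. (-1::real) ^ card (K - S)))"
    by (intro sum.cong refl) (simp add: down_closed sum_distrib_left mult_ac)
  also have "\<dots> = (\<Sum>K\<in>?Z. if K = {} then f K else 0)"
  proof (intro sum.cong refl)
    fix K assume "K \<in> ?Z"
    then have "finite K" using assms finite_subset by (auto simp: bounded_supsets_def)
    then show "f K * (\<Sum>S\<in>Pow K. (-1::real) ^ card (K - S)) = (if K = {} then f K else 0)"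
      by (simp add: alternating_sum_Pow)
  qed
  also have "\<dots> = f {}"
    using finZ by (simp add: bounded_supsets_def)
  finally show ?thesis .
qed

text \<open>The Moebius transform is linear, so it commutes with the knapsack shift g * y.\<close>
lemma mobius_knap_shift:
  "mobius L N (knap_shift V c C y) S
     = C * mobius L N y S - (\<Sum>j\<in>V. c j * mobius L N (\<lambda>K. y (insert j K)) S)"
proof -
  have "mobius L N (knap_shift V c C y) S
      = (\<Sum>K\<in>bounded_supsets L N S. C * ((-1) ^ card (K - S) * y K)
          - (\<Sum>j\<in>V. c j * ((-1) ^ card (K - S) * y (insert j K))))"
    unfolding mobius_def knap_shift_def
    by (intro sum.cong refl) (simp add: right_diff_distrib sum_distrib_left mult_ac)
  also have "\<dots> = C * mobius L N y S - (\<Sum>j\<in>V. c j * mobius L N (\<lambda>K. y (insert j K)) S)"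
    by (simp add: mobius_def sum_subtractf sum_distrib_left sum.swap[of _ V])
  finally show ?thesis .
qed

lemma knapsack_OPT_ge:
  assumes "finite V" "X \<subseteq> V" "(\<Sum>i\<in>X. c i) \<le> C"
  shows "(\<Sum>i\<in>X. v i) \<le> knapsack_OPT V c v C"
proof -
  have "finite {X. X \<subseteq> V \<and> (\<Sum>i\<in>X. c i) \<le> C}"
    by (rule finite_subset[of _ "Pow V"]) (use assms in auto)
  then have "finite {(\<Sum>i\<in>X. v i) | X. X \<subseteq> V \<and> (\<Sum>i\<in>X. c i) \<le> C}"
    by (rule finite_image_set)
  then show ?thesis unfolding knapsack_OPT_def by (rule Max_ge) (use assms in blast)
qed

definition lp_feasible :: "'a set \<Rightarrow> ('a \<Rightarrow> real) \<Rightarrow> real \<Rightarrow> ('a \<Rightarrow> real) \<Rightarrow> bool" where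
  "lp_feasible V c C x \<longleftrightarrow> (\<forall>k\<in>V. 0 \<le> x k \<and> x k \<le> 1) \<and> (\<Sum>k\<in>V. c k * x k) \<le> C"

definition fractional :: "'a set \<Rightarrow> ('a \<Rightarrow> real) \<Rightarrow> 'a set" where
  "fractional V x = {k \<in> V. 0 < x k \<and> x k < 1}"

definition lp_improves ::
    "'a set \<Rightarrow> ('a \<Rightarrow> real) \<Rightarrow> ('a \<Rightarrow> real) \<Rightarrow> real \<Rightarrow> ('a \<Rightarrow> real) \<Rightarrow> ('a \<Rightarrow> real) \<Rightarrow> bool" where
  "lp_improves V c v C x x' \<longleftrightarrow> lp_feasible V c C x' \<and>
     (\<Sum>k\<in>V. v k * x k) \<le> (\<Sum>k\<in>V. v k * x' k) \<and> fractional V x' \<subset> fractional V x"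

lemma sum_fun_upd:
  fixes g x :: "'a \<Rightarrow> real"
  assumes "finite V" "i \<in> V"
  shows "(\<Sum>k\<in>V. g k * (x(i := a)) k) = (\<Sum>k\<in>V. g k * x k) + g i * (a - x i)"
proof -
  have "(\<Sum>k\<in>V. g k * (x(i := a)) k) = (\<Sum>k\<in>V. g k * x k + (if k = i then g i * (a - x i) else 0))"
    by (rule sum.cong) (auto simp: algebra_simps)
  also have "\<dots> = (\<Sum>k\<in>V. g k * x k) + g i * (a - x i)"
    using assms by (simp add: sum.distrib)
  finally show ?thesis .
qed

lemma lp_improve_free_item:
  assumes "finite V" "\<forall>k\<in>V. 0 \<le> v k" "lp_feasible V c C x" "i \<in> fractional V x" "c i = 0"
  shows "lp_improves V c v C x (x(i := 1))"
proof -
  have i: "i \<in> V" "x i < 1" using assms(4) by (auto simp: fractional_def)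
  show ?thesis
    using assms i sum_fun_upd[OF assms(1) i(1), of c x 1] sum_fun_upd[OF assms(1) i(1), of v x 1]
    by (auto simp: lp_improves_def lp_feasible_def fractional_def)
qed

text \<open>Shifting capacity from item j to an item i of at least the same value density
  keeps the cost, does not decrease the value, and makes i or j integral.\<close>
lemma lp_improve_exchange:
  assumes fin: "finite V"
    and feas: "lp_feasible V c C x"
    and ij: "i \<in> fractional V x" "j \<in> fractional V x" "i \<noteq> j"
    and pos: "0 < c i" "0 < c j"
    and ratio: "v j * c i \<le> v i * c j"
  shows "\<exists>x'. lp_improves V c v C x x'"
proof -
  have i: "i \<in> V" "0 < x i" "x i < 1" and j: "j \<in> V" "0 < x j" "x j < 1"
    using ij by (auto simp: fractional_def)
  define d where "d = min ((1 - x i) * c i) (x j * c j)"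
  define x' where "x' = x(i := x i + d / c i, j := x j - d / c j)"
  have d0: "0 \<le> d" using i j pos by (simp add: d_def)
  have d: "0 \<le> d / c i" "0 \<le> d / c j" "d / c i \<le> 1 - x i" "d / c j \<le> x j"
    using i j pos by (simp_all add: d_def pos_divide_le_eq)
  have change: "(\<Sum>k\<in>V. g k * x' k) = (\<Sum>k\<in>V. g k * x k) + d * (g i / c i - g j / c j)" for g
  proof -
    have "(\<Sum>k\<in>V. g k * x' k)
        = (\<Sum>k\<in>V. g k * (x(i := x i + d / c i)) k) + g j * ((x j - d / c j) - x j)"
      unfolding x'_def using sum_fun_upd[OF fin j(1), of g "x(i := x i + d / c i)"] ij(3) by simp
    also have "\<dots> = (\<Sum>k\<in>V. g k * x k) + g i * (d / c i) - g j * (d / c j)"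
      using sum_fun_upd[OF fin i(1), of g x] by simp
    finally show ?thesis by (simp add: algebra_simps)
  qed
  have "lp_feasible V c C x'"
    using feas d ij(3) change[of c] pos by (auto simp: lp_feasible_def x'_def)
  moreover have "(\<Sum>k\<in>V. v k * x k) \<le> (\<Sum>k\<in>V. v k * x' k)"
  proof -
    have "v j / c j \<le> v i / c i" using ratio pos by (simp add: divide_simps mult.commute)
    then show ?thesis using change[of v] d0 by simp
  qed
  moreover have "fractional V x' \<subset> fractional V x"
  proof -
    have "x' i = 1 \<or> x' j = 0" using pos ij(3) by (auto simp: x'_def d_def min_def)
    then have "i \<notin> fractional V x' \<or> j \<notin> fractional V x'" by (auto simp: fractional_def)
    moreover have "fractional V x' \<subseteq> fractional V x" using ij by (auto simp: fractional_def x'_def)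
    ultimately show ?thesis using ij by blast
  qed
  ultimately show ?thesis unfolding lp_improves_def by blast
qed

lemma lp_improve_two_fractional:
  assumes "finite V" "\<forall>k\<in>V. 0 \<le> c k" "\<forall>k\<in>V. 0 \<le> v k" "lp_feasible V c C x"
    and ij: "i \<in> fractional V x" "j \<in> fractional V x" "i \<noteq> j"
  shows "\<exists>x'. lp_improves V c v C x x'"
proof -
  have "i \<in> V" "j \<in> V" using ij by (auto simp: fractional_def)
  then consider "c i = 0" | "c j = 0" | "0 < c i" "0 < c j" using assms(2) by fastforce
  then show ?thesis
  proof cases
    case 1 then show ?thesis using lp_improve_free_item[OF assms(1,3,4) ij(1)] by blast
  next
    case 2 then show ?thesis using lp_improve_free_item[OF assms(1,3,4) ij(2)] by blast
  next
    case 3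
    show ?thesis
    proof (cases "v j * c i \<le> v i * c j")
      case True then show ?thesis using lp_improve_exchange[OF assms(1,4) ij 3] by blast
    next
      case False then show ?thesis
        using lp_improve_exchange[OF assms(1,4) ij(2,1) ij(3)[symmetric] 3(2,1)] by simp
    qed
  qed
qed

text \<open>With at most one fractional item, the items with x_k = 1 form a feasible set, and
  the fractional item contributes at most its value m.\<close>
lemma lp_value_one_fractional:
  assumes fin: "finite V" and "\<forall>k\<in>V. 0 \<le> c k" "\<forall>k\<in>V. 0 \<le> v k" and feas: "lp_feasible V c C x"
    and few: "card (fractional V x) \<le> 1"
    and small: "\<forall>k\<in>fractional V x. v k \<le> m" and "0 \<le> m"
  shows "(\<Sum>k\<in>V. v k * x k) \<le> knapsack_OPT V c v C + m"
proof -
  let ?X = "{k \<in> V. x k = 1}"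
  have x01: "\<forall>k\<in>V. 0 \<le> x k \<and> x k \<le> 1" "(\<Sum>k\<in>V. c k * x k) \<le> C"
    using feas by (auto simp: lp_feasible_def)
  have "(\<Sum>k\<in>?X. c k) = (\<Sum>k\<in>?X. c k * x k)" by simp
  also have "\<dots> \<le> (\<Sum>k\<in>V. c k * x k)"
    by (rule sum_mono2[OF fin]) (use assms(2) x01 in auto)
  finally have "(\<Sum>k\<in>?X. v k) \<le> knapsack_OPT V c v C"
    using x01 by (intro knapsack_OPT_ge[OF fin]) auto
  moreover have "(\<Sum>k\<in>fractional V x. v k * x k) \<le> m"
  proof -
    have "finite (fractional V x)" using fin by (simp add: fractional_def)
    then consider "fractional V x = {}" | k where "fractional V x = {k}"
      using few by (metis card_0_eq card_1_singletonE le_SucE One_nat_def le_zero_eq)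
    then show ?thesis
    proof cases
      case (2 k)
      then have "0 \<le> v k" "v k \<le> m" "x k \<le> 1" using assms(3) small x01 by (auto simp: fractional_def)
      moreover have "v k * x k \<le> v k" using \<open>x k \<le> 1\<close> \<open>0 \<le> v k\<close> by (rule mult_left_le)
      ultimately show ?thesis using 2 by simp
    qed (use assms in simp)
  qed
  moreover have "(\<Sum>k\<in>V. v k * x k) = (\<Sum>k\<in>?X. v k * x k) + (\<Sum>k\<in>fractional V x. v k * x k)"
  proof -
    have "(\<Sum>k\<in>V. v k * x k) = (\<Sum>k\<in>V - ?X. v k * x k) + (\<Sum>k\<in>?X. v k * x k)"
      by (rule sum.subset_diff) (use fin in auto)
    moreover have "(\<Sum>k\<in>V - ?X. v k * x k) = (\<Sum>k\<in>fractional V x. v k * x k)"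
      by (rule sum.mono_neutral_right) (use fin x01 in \<open>auto simp: fractional_def order_le_less\<close>)
    ultimately show ?thesis by simp
  qed
  ultimately show ?thesis by simp
qed

lemma lp_value_bound:
  assumes fin: "finite V" and c0: "\<forall>k\<in>V. 0 \<le> c k" and v0: "\<forall>k\<in>V. 0 \<le> v k"
    and "lp_feasible V c C x" and "\<forall>k\<in>fractional V x. v k \<le> m" and "0 \<le> m"
  shows "(\<Sum>k\<in>V. v k * x k) \<le> knapsack_OPT V c v C + m"
  using assms(4,5)
proof (induction "card (fractional V x)" arbitrary: x rule: less_induct)
  case less
  have finF: "finite (fractional V x)" using fin by (simp add: fractional_def)
  show ?case
  proof (cases "card (fractional V x) \<le> 1")
    case True
    then show ?thesis using lp_value_one_fractional[OF fin c0 v0 less.prems(1)] less.prems(2) assms(6)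
      by blast
  next
    case False
    then obtain i j where "i \<in> fractional V x" "j \<in> fractional V x" "i \<noteq> j"
      by (metis One_nat_def card_le_Suc0_iff_eq finF)
    then obtain x' where x': "lp_improves V c v C x x'"
      using lp_improve_two_fractional[OF fin c0 v0 less.prems(1)] by blast
    then have "card (fractional V x') < card (fractional V x)"
      using finF by (auto simp: lp_improves_def intro: psubset_card_mono)
    then have "(\<Sum>k\<in>V. v k * x' k) \<le> knapsack_OPT V c v C + m"
      using x' less by (auto simp: lp_improves_def)
    then show ?thesis using x' by (auto simp: lp_improves_def)
  qed
qed

locale lasserre_knapsack_point =
  fixes V :: "'a set" and c v :: "'a \<Rightarrow> real" and C :: real and t :: nat
    and y :: "'a set \<Rightarrow> real"
  assumes finite_V: "finite V"
    and cost_nonneg: "\<And>i. i \<in> V \<Longrightarrow> 0 \<le> c i"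
    and value_nonneg: "\<And>i. i \<in> V \<Longrightarrow> 0 \<le> v i"
    and t_ge_2: "t \<ge> 2"
    and y_lasserre: "y \<in> lasserre_knapsack t V c C"
begin

lemma y_bounds: "I \<subseteq> V \<Longrightarrow> card I \<le> 2 * t \<Longrightarrow> 0 \<le> y I \<and> y I \<le> 1"
  using y_lasserre by (auto simp: lasserre_knapsack_def Pt_def)

lemma y_empty: "y {} = 1"
  using y_lasserre by (simp add: lasserre_knapsack_def)

lemma psd_y: "moment_psd (Pt t V) y"
  using y_lasserre by (simp add: lasserre_knapsack_def)

lemma psd_shift: "moment_psd (Pt (t - 1) V) (knap_shift V c C y)"
  using y_lasserre by (simp add: lasserre_knapsack_def)

lemma finite_Pt: "finite (Pt k V)"
  unfolding Pt_def by (rule finite_subset[of _ "Pow V"]) (use finite_V in auto)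

lemma shift_nonneg: "I \<in> Pt (t - 1) V \<Longrightarrow> 0 \<le> knap_shift V c C y I"
  by (rule moment_psd_diag[OF psd_shift finite_Pt])

lemma capacity_nonneg: "0 \<le> C"
proof -
  have "0 \<le> knap_shift V c C y {}" by (rule shift_nonneg) (simp add: Pt_def)
  moreover have "0 \<le> (\<Sum>j\<in>V. c j * y {j})"
    by (rule sum_nonneg) (use cost_nonneg y_bounds t_ge_2 in auto)
  ultimately show ?thesis by (simp add: knap_shift_def y_empty)
qed

text \<open>A small set that overflows the knapsack has y_I = 0, since
  0 \<le> (g * y)_I \<le> (C - c(I)) y_I.\<close>
lemma infeasible_set_zero:
  assumes I: "I \<subseteq> V" "card I \<le> t - 1" and over: "C < (\<Sum>i\<in>I. c i)"
  shows "y I = 0"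
proof -
  have "0 \<le> knap_shift V c C y I" by (rule shift_nonneg) (use I in \<open>simp add: Pt_def\<close>)
  also have "knap_shift V c C y I
      = (C - (\<Sum>i\<in>I. c i)) * y I - (\<Sum>j\<in>V - I. c j * y (I \<union> {j}))"
  proof -
    have "(\<Sum>j\<in>I. c j * y (I \<union> {j})) = (\<Sum>j\<in>I. c j * y I)"
      by (intro sum.cong refl) (simp add: insert_absorb)
    then have "(\<Sum>j\<in>V. c j * y (I \<union> {j})) = (\<Sum>j\<in>V - I. c j * y (I \<union> {j})) + (\<Sum>j\<in>I. c j * y I)"
      by (subst sum.subset_diff[OF I(1) finite_V]) simp
    then show ?thesis by (simp add: knap_shift_def sum_distrib_right left_diff_distrib)
  qed
  also have "\<dots> \<le> (C - (\<Sum>i\<in>I. c i)) * y I"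
  proof -
    have "card (I \<union> {j}) \<le> 2 * t" for j
      using card_Un_le[of I "{j}"] I(2) t_ge_2 by simp
    then show ?thesis
      using I(1) by (auto intro!: sum_nonneg mult_nonneg_nonneg cost_nonneg simp: y_bounds)
  qed
  finally have "0 \<le> (C - (\<Sum>i\<in>I. c i)) * y I" .
  moreover have "0 \<le> y I" using y_bounds[OF I(1)] I(2) by simp
  ultimately show ?thesis using over by (auto simp: zero_le_mult_iff)
qed

text \<open>Zeros propagate upwards: if y_I = 0 with |I| \<le> t then y_K = 0 for every
  K \<supseteq> I with |K| \<le> 2t (split K into two blocks of size at most t).\<close>
lemma zero_superset:
  assumes IK: "I \<subseteq> K" and K: "K \<subseteq> V" "card K \<le> 2 * t"
    and I: "card I \<le> t" "y I = 0"
  shows "y K = 0"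
proof -
  have finK: "finite K" using K(1) finite_V by (rule finite_subset)
  have finI: "finite I" using IK finK by (rule finite_subset)
  have "min t (card K) - card I \<le> card (K - I)"
    using card_Diff_subset[OF finI IK] card_mono[OF finK IK] by linarith
  then obtain A where A: "A \<subseteq> K - I" "card A = min t (card K) - card I" "finite A"
    by (rule obtain_subset_with_card_n)
  define K1 where "K1 = I \<union> A"
  have card_K1: "card K1 = min t (card K)"
    using A I(1) card_Un_disjoint[OF finI A(3)] card_mono[OF finK IK] unfolding K1_def by auto
  have "K1 \<subseteq> K" using A IK by (auto simp: K1_def)
  then have K1: "K1 \<in> Pt t V" using card_K1 K(1) by (auto simp: Pt_def)
  have yK1: "y K1 = 0"
    using moment_psd_zero_union[OF psd_y finite_Pt _ K1 I(2)] IK K(1) I(1)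
    by (simp add: K1_def Pt_def)
  have "K - K1 \<in> Pt t V"
  proof -
    have "finite K1" using \<open>K1 \<subseteq> K\<close> finK by (rule finite_subset)
    then have "card (K - K1) = card K - min t (card K)"
      using card_Diff_subset[OF _ \<open>K1 \<subseteq> K\<close>] card_K1 by simp
    then show ?thesis using K by (auto simp: Pt_def)
  qed
  then have "y (K1 \<union> (K - K1)) = 0"
    by (rule moment_psd_zero_union[OF psd_y finite_Pt K1 _ yK1])
  moreover have "K1 \<union> (K - K1) = K" using \<open>K1 \<subseteq> K\<close> by auto
  ultimately show ?thesis by simp
qed

abbreviation OPT :: real where
  "OPT \<equiv> knapsack_OPT V c v C"

definition large :: "'a set" where
  "large = {i \<in> V. OPT < v i * real (t - 1)}"

lemma large_subset: "large \<subseteq> V"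
  by (auto simp: large_def)

lemma finite_large: "finite large"
  using large_subset finite_V by (rule finite_subset)

lemma OPT_nonneg: "0 \<le> OPT"
  using knapsack_OPT_ge[OF finite_V, of "{}" c C v] capacity_nonneg by simp

lemma large_sets_infeasible:
  assumes I: "I \<subseteq> large" "card I = t - 1"
  shows "C < (\<Sum>i\<in>I. c i)"
proof (rule ccontr)
  assume "\<not> C < (\<Sum>i\<in>I. c i)"
  moreover have "I \<subseteq> V" using I(1) large_subset by (rule order_trans)
  ultimately have "(\<Sum>i\<in>I. v i) \<le> OPT"
    by (intro knapsack_OPT_ge[OF finite_V]) simp_all
  then have "real (t - 1) * (\<Sum>i\<in>I. v i) \<le> real (t - 1) * OPT"
    by (rule mult_left_mono) simp
  moreover have "real (t - 1) * OPT < real (t - 1) * (\<Sum>i\<in>I. v i)"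
  proof -
    have "finite I" using I(1) finite_large by (rule finite_subset)
    moreover have "I \<noteq> {}" using I(2) t_ge_2 by auto
    ultimately have "(\<Sum>i\<in>I. OPT) < (\<Sum>i\<in>I. v i * real (t - 1))"
      using I(1) by (intro sum_strict_mono) (auto simp: large_def)
    then show ?thesis using I(2) by (simp add: sum_distrib_right mult.commute)
  qed
  ultimately show False by linarith
qed

lemma y_zero_many_large:
  assumes "K \<subseteq> V" "card K \<le> 2 * t" "K' \<subseteq> K" "K' \<subseteq> large" "t - 1 \<le> card K'"
  shows "y K = 0"
proof -
  obtain I where I: "I \<subseteq> K'" "card I = t - 1"
    by (rule obtain_subset_with_card_n[OF assms(5)])
  have "I \<subseteq> large" using I(1) assms(4) by (rule order_trans)
  then have "C < (\<Sum>i\<in>I. c i)" using I(2) by (rule large_sets_infeasible)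
  moreover have "I \<subseteq> V" using \<open>I \<subseteq> large\<close> large_subset by (rule order_trans)
  ultimately have "y I = 0" using I(2) by (intro infeasible_set_zero) simp_all
  moreover have "I \<subseteq> K" using I(1) assms(3) by (rule order_trans)
  ultimately show ?thesis using zero_superset[of I K] assms(1,2) I(2) by simp
qed

text \<open>Conditioning on the set S of chosen large items (|S| \<le> t - 2): mass S is the
  weight of the event "exactly S", mass_with S i the weight of "exactly S, and item i".\<close>
abbreviation slices :: "'a set set" where
  "slices \<equiv> bounded_supsets large (t - 2) {}"

abbreviation mass :: "'a set \<Rightarrow> real" where
  "mass S \<equiv> mobius large (t - 2) y S"

abbreviation mass_with :: "'a set \<Rightarrow> 'a \<Rightarrow> real" where
  "mass_with S i \<equiv> mobius large (t - 2) (\<lambda>K. y (insert i K)) S"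

lemma finite_slices: "finite slices"
  using finite_large by (rule finite_bounded_supsets)

lemma slices_in_Pt: "slices \<subseteq> Pt (t - 1) V" "slices \<subseteq> Pt t V"
  using large_subset by (auto simp: bounded_supsets_def Pt_def)

text \<open>Above the truncation level t - 2 (and up to twice it) y and its shifts vanish on
  sets of large items; this is what makes the truncated Moebius transform exact.\<close>
lemma y_window_zero:
  assumes "K \<subseteq> large" "t - 2 < card K" "card K \<le> 2 * (t - 2) + 1"
  shows "y K = 0"
proof (rule y_zero_many_large[of K K])
  show "K \<subseteq> V" using assms(1) large_subset by (rule order_trans)
qed (use assms t_ge_2 in simp_all)

lemma y_insert_window_zero:
  assumes "K \<subseteq> large" "t - 2 < card K" "card K \<le> 2 * (t - 2) + 1" "i \<in> V"
  shows "y (insert i K) = 0"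
proof (rule y_zero_many_large[of _ K])
  have KV: "K \<subseteq> V" using assms(1) large_subset by (rule order_trans)
  then show "insert i K \<subseteq> V" using assms(4) by simp
  have "card (insert i K) \<le> card K + 1"
    using finite_subset[OF KV finite_V] by (simp add: card_insert_if)
  then show "card (insert i K) \<le> 2 * t" using assms(3) t_ge_2 by linarith
qed (use assms in auto)

lemma shift_window_zero:
  assumes "K \<subseteq> large" "t - 2 < card K" "card K \<le> 2 * (t - 2) + 1"
  shows "knap_shift V c C y K = 0"
  using y_window_zero[OF assms] y_insert_window_zero[OF assms] by (simp add: knap_shift_def)

lemma slice_facts:
  assumes "S \<in> slices"
  shows "S \<subseteq> large" "card S \<le> t - 2" "finite S"
  using assms finite_subset[OF _ finite_large] by (auto simp: bounded_supsets_def)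

text \<open>The slices are nonnegative (PSD of M_t(y)) and satisfy the capacity constraint
  (PSD of M_{t-1}(g * y)).\<close>
lemma mass_nonneg:
  assumes S: "S \<in> slices"
  shows "0 \<le> mass S"
proof -
  have "0 \<le> quad_form (Pt t V) y (mobius_vec large (t - 2) S)"
    using psd_y by (rule moment_psdD)
  also have "\<dots> = quad_form slices y (mobius_vec large (t - 2) S)"
    by (rule quad_form_support[OF finite_Pt slices_in_Pt(2) mobius_vec_support])
  also have "\<dots> = mass S"
    using slice_facts[OF S] by (intro quad_form_mobius_vec[OF finite_large] y_window_zero) auto
  finally show ?thesis .
qed

lemma slice_capacity:
  assumes S: "S \<in> slices"
  shows "(\<Sum>j\<in>V. c j * mass_with S j) \<le> C * mass S"
proof -
  have "0 \<le> quad_form (Pt (t - 1) V) (knap_shift V c C y) (mobius_vec large (t - 2) S)"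
    using psd_shift by (rule moment_psdD)
  also have "\<dots> = quad_form slices (knap_shift V c C y) (mobius_vec large (t - 2) S)"
    by (rule quad_form_support[OF finite_Pt slices_in_Pt(1) mobius_vec_support])
  also have "\<dots> = mobius large (t - 2) (knap_shift V c C y) S"
    using slice_facts[OF S] by (intro quad_form_mobius_vec[OF finite_large] shift_window_zero) auto
  also have "\<dots> = C * mass S - (\<Sum>j\<in>V. c j * mass_with S j)"
    by (rule mobius_knap_shift)
  finally show ?thesis by simp
qed

lemma mass_with_member:
  assumes "i \<in> S"
  shows "mass_with S i = mass S"
  unfolding mobius_def
  using assms by (intro sum.cong refl) (auto simp: bounded_supsets_def insert_absorb)

lemma mass_with_large_outside:
  assumes S: "S \<in> slices" and i: "i \<in> large" "i \<notin> S"
  shows "mass_with S i = 0"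
proof -
  have "mass_with S i
      = (\<Sum>J\<in>bounded_supsets large (t - 2) S. (-1) ^ card (J - S) * y (insert i S \<union> J))"
    unfolding mobius_def by (intro sum.cong refl) (auto simp: bounded_supsets_def Un_absorb1)
  also have "\<dots> = 0"
  proof (rule mobius_row_vanishes[OF finite_large])
    show "S \<subseteq> insert i S" "insert i S \<subseteq> large" "i \<in> insert i S" "i \<notin> S"
      using slice_facts[OF S] i by auto
    have "card (insert i S) \<le> t - 2 + 1"
      using slice_facts[OF S] by (simp add: card_insert_if)
    then show "y K = 0" if "K \<subseteq> large" "t - 2 < card K" "card K \<le> card (insert i S) + (t - 2)" for K
      using that by (intro y_window_zero) auto
  qed
  finally show ?thesis .
qed

text \<open>For a small item i the form a^2 mass + (2ab + b^2) mass_with is nonnegative, by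
  PSD of M_t(y) tested on the lifted signed indicator.\<close>
lemma mass_with_quadratic:
  assumes S: "S \<in> slices" and i: "i \<in> V" "i \<notin> large"
  shows "0 \<le> a * a * mass S + (2 * a * b + b * b) * mass_with S i"
proof -
  let ?z = "mobius_vec large (t - 2) S"
  define z' where "z' I = (if i \<in> I then b * ?z (I - {i}) else a * ?z I)" for I
  have avoid: "i \<notin> K" if "K \<in> slices" for K using that i by (auto simp: bounded_supsets_def)
  have support: "z' I = 0" if "I \<notin> slices \<union> insert i ` slices" for I
  proof (cases "i \<in> I")
    case True
    then have "I - {i} \<notin> slices" using that by (metis UnCI image_eqI insert_Diff)
    then show ?thesis using True by (simp add: z'_def mobius_vec_support)
  qed (use that in \<open>simp add: z'_def mobius_vec_support\<close>)
  have extended: "slices \<union> insert i ` slices \<subseteq> Pt t V"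
  proof -
    have "insert i K \<in> Pt t V" if "K \<in> slices" for K
      using slice_facts[OF that] slices_in_Pt(2) that i(1) t_ge_2
      by (auto simp: Pt_def card_insert_if)
    then show ?thesis using slices_in_Pt(2) by blast
  qed
  have "0 \<le> quad_form (Pt t V) y z'" using psd_y by (rule moment_psdD)
  also have "\<dots> = quad_form (slices \<union> insert i ` slices) y z'"
    by (rule quad_form_support[OF finite_Pt extended support])
  also have "\<dots> = a * a * quad_form slices y ?z
      + (2 * a * b + b * b) * quad_form slices (\<lambda>K. y (insert i K)) ?z"
    unfolding z'_def by (rule quad_form_extend[OF finite_slices avoid])
  also have "quad_form slices y ?z = mass S"
    using slice_facts[OF S] by (intro quad_form_mobius_vec[OF finite_large] y_window_zero) auto
  also have "quad_form slices (\<lambda>K. y (insert i K)) ?z = mass_with S i"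
    using slice_facts[OF S] i(1)
    by (intro quad_form_mobius_vec[OF finite_large] y_insert_window_zero) auto
  finally show ?thesis .
qed

lemma mass_with_bounds:
  assumes S: "S \<in> slices" and i: "i \<in> V"
  shows "0 \<le> mass_with S i \<and> mass_with S i \<le> mass S"
proof (cases "i \<in> large")
  case True
  then show ?thesis
    using mass_with_member[of i S] mass_with_large_outside[OF S True] mass_nonneg[OF S]
    by (cases "i \<in> S") auto
next
  case False
  then show ?thesis
    using mass_with_quadratic[OF S i False, of 0 1] mass_with_quadratic[OF S i False, of 1 "-1"]
    by simp
qed

lemma mass_with_large:
  assumes "S \<in> slices" "i \<in> large"
  shows "mass_with S i = 0 \<or> mass_with S i = mass S"
  using mass_with_member[of i S] mass_with_large_outside[OF assms] by (cases "i \<in> S") auto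

lemma normalized_slice:
  assumes S: "S \<in> slices" and pos: "0 < mass S"
  defines "x \<equiv> \<lambda>i. mass_with S i / mass S"
  shows "lp_feasible V c C x" and "fractional V x \<inter> large = {}"
proof -
  have "(\<Sum>k\<in>V. c k * x k) = (\<Sum>k\<in>V. c k * mass_with S k) / mass S"
    by (simp add: x_def sum_divide_distrib)
  also have "\<dots> \<le> C" using slice_capacity[OF S] pos by (simp add: divide_simps)
  finally show "lp_feasible V c C x"
    using mass_with_bounds[OF S] pos by (simp add: lp_feasible_def x_def divide_simps)
  show "fractional V x \<inter> large = {}"
    using pos by (auto simp: fractional_def x_def dest!: mass_with_large[OF S])
qed

lemma slice_value_bound:
  assumes S: "S \<in> slices"
  shows "(\<Sum>i\<in>V. v i * mass_with S i) \<le> (OPT + OPT / real (t - 1)) * mass S"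
proof (cases "mass S = 0")
  case True
  then have "mass_with S i = 0" if "i \<in> V" for i using mass_with_bounds[OF S that] by simp
  then show ?thesis using True by simp
next
  case False
  then have pos: "0 < mass S" using mass_nonneg[OF S] by simp
  define x where "x = (\<lambda>i. mass_with S i / mass S)"
  have small: "\<forall>i\<in>fractional V x. v i \<le> OPT / real (t - 1)"
    using normalized_slice(2)[OF S pos, folded x_def] t_ge_2
    by (auto simp: large_def fractional_def pos_le_divide_eq not_less)
  have "(\<Sum>i\<in>V. v i * x i) \<le> OPT + OPT / real (t - 1)"
    using normalized_slice(1)[OF S pos, folded x_def] small OPT_nonneg cost_nonneg value_nonneg t_ge_2
    by (intro lp_value_bound[OF finite_V]) auto
  moreover have "(\<Sum>i\<in>V. v i * mass_with S i) = (\<Sum>i\<in>V. v i * x i) * mass S"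
    using pos by (simp add: x_def sum_distrib_right)
  ultimately show ?thesis using pos by (simp add: mult_right_mono)
qed

text \<open>Summing over the slices, whose masses add up to y {} = 1.\<close>
lemma lasserre_value_bound: "(\<Sum>i\<in>V. v i * y {i}) \<le> (1 + 1 / (real t - 1)) * OPT"
proof -
  have "y {i} = (\<Sum>S\<in>slices. mass_with S i)" for i
    using mobius_sum[OF finite_large, of "t - 2" "\<lambda>K. y (insert i K)"] by simp
  then have "(\<Sum>i\<in>V. v i * y {i}) = (\<Sum>i\<in>V. v i * (\<Sum>S\<in>slices. mass_with S i))"
    by simp
  also have "\<dots> = (\<Sum>S\<in>slices. \<Sum>i\<in>V. v i * mass_with S i)"
    by (simp add: sum_distrib_left sum.swap[of _ slices])
  also have "\<dots> \<le> (\<Sum>S\<in>slices. (OPT + OPT / real (t - 1)) * mass S)"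
    by (rule sum_mono) (rule slice_value_bound)
  also have "\<dots> = OPT + OPT / real (t - 1)"
    using mobius_sum[OF finite_large, of "t - 2" y] by (simp add: y_empty flip: sum_distrib_left)
  also have "\<dots> = (1 + 1 / (real t - 1)) * OPT"
    using t_ge_2 by (simp add: of_nat_diff algebra_simps)
  finally show ?thesis .
qed

end

text \<open>The main theorem.\<close>
theorem mainTheorem10:
  fixes V :: "'a set" and c v :: "'a \<Rightarrow> real" and C :: real and t :: nat
    and y :: "'a set \<Rightarrow> real"
  assumes "finite V"
    and "\<And>i. i \<in> V \<Longrightarrow> 0 \<le> c i"
    and "\<And>i. i \<in> V \<Longrightarrow> 0 \<le> v i"
    and "\<And>i. i \<in> V \<Longrightarrow> c i \<le> C"
    and "t \<ge> 2"
    and "y \<in> lasserre_knapsack t V c C"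
  shows "(\<Sum>i\<in>V. v i * y {i}) \<le> (1 + 1 / (real t - 1)) * knapsack_OPT V c v C"
proof -
  interpret lasserre_knapsack_point V c v C t y
    using assms by unfold_locales auto
  show ?thesis by (rule lasserre_value_bound)
qed

end
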